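(* If $n\ge 3t+1$ and all honest processors have the same initial message $\boldsymbol M$, then in every execution of COOL every honest processor outputs $\boldsymbol M$ (validity).
   Context: Setting. $n$ processors indexed by $[1:n]$, pairwise joined by reliable private synchronous channels; recipients know senders. At most $t$ processors are dishonest, controlled by a Byzantine adversary of unbounded computational power knowing all inputs, who may make them deviate arbitrarily (missing values are replaced by a fixed default); the others are honest. Processor $i$ holds an $\ell$-bit initial message $\boldsymbol w_i$. $\phi$ is a default value different from every $\ell$-bit message. Logarithms are base 2. Code. $k=\lfloor t/5\rfloor+1$, $c=\lceil \max\{\ell,(t/5+1)\log(n+1)\}/k\rceil$. Messages are zero-padded to $kc$ bits and viewed in $GF(2^c)^k$. Integers in $[1:n]$ are identified with distinct nonzero elements of $GF(2^c)$; $\boldsymbol h_i\in GF(2^c)^k$ has entries $h_{i,j}=\prod_{p\in[1:k],\,p\ne j}\frac{i-p}{j-p}$ (field arithmetic). COOL (honest processor $i$). Initialization: updated message $\boldsymbol w^{(i)}:=\boldsymbol w_i$, $y^{(i)}_j:=\boldsymbol h_j^{\mathsf T}\boldsymbol w_i$ for $j\in[1:n]$, $u_i(i):=1$. Phase 1. (a) Send $(y^{(i)}_j,y^{(i)}_i)$ to each $j\ne i$. (b) For $j\ne i$, link indicator $u_i(j):=1$ if the pair received from $j$ equals $(y^{(i)}_i,y^{(i)}_j)$, else $0$. Success indicator $s_i:=1$ if $\sum_{j=1}^n u_i(j)\ge n-t$; otherwise $s_i:=0$ and $\boldsymbol w^{(i)}:=\phi$. (c) Send $s_i$ to all; each processor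 records the indicator received from each $j$ (own for itself) and forms $\mathcal S_1=\{j:s_j=1\}$, $\mathcal S_0=\{j:s_j=0\}$ (views may differ). Phase 2. If $s_i=1$: set $u_i(j):=0$ for all $j\in\mathcal S_0$; if now $\sum_j u_i(j)<n-t$, set $s_i:=0$, $\boldsymbol w^{(i)}:=\phi$, and send $s_i=0$ to all. Everyone overwrites recorded indicators with newly received ones and recomputes $\mathcal S_0,\mathcal S_1$. Phase 3. Repeat Phase 2 once more. Vote $v_i:=1$ if the recorded indicators satisfy $\sum_j s_j\ge 2t+1$, else $0$. Run on the votes a deterministic error-free binary Byzantine agreement protocol for $t<n/3$ (e.g. Berman–Garay–Perry or Coan–Welch), which guarantees all honest processors decide, decide equally, and decide the common honest vote when all honest votes agree. If the decision is $0$: set $\boldsymbol w^{(i)}:=\phi$, output $\phi$, stop. Phase 4 (decision 1). If $s_i=0$: replace $y^{(i)}_i$ by the most frequent value (fixed tie-breaking) among the first components of the Phase-1 pairs received from $j\in\mathcal S_1$; send it to each $j\in\mathcal S_0\setminus\{i\}$; with $z_i=y^{(i)}_i$, $z_j$ = value received from $j$ in Phase 4 for $j\in\mathcal S_0\setminus\{i\}$, $z_j$ = second component of the Phase-1 pair from $j$ for $j\in\mathcal S_1$, set $\boldsymbol w^{(i)}$ to a message $\boldsymbol x$ with $\boldsymbol h_j^{\mathsf T}\boldsymbol x=z_j$ for at least $n-t$ indices $j$ ($\phi$ if none). If $s_i=1$ keep $\boldsymbol w^{(i)}$. Output $\boldsymbol w^{(i)}$ and stop. *)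

theory Defs
  imports Complex_Main
begin

definition kpar :: "nat \<Rightarrow> nat" where
  "kpar t = t div 5 + 1"

definition cpar :: "nat \<Rightarrow> nat \<Rightarrow> nat \<Rightarrow> nat" where
  "cpar n t l = nat \<lceil> max (real l) ((real t / 5 + 1) * log 2 (real n + 1)) / real (kpar t) \<rceil>"

text \<open>Vectors in GF(2^c)^k are
  lists of length k; entry m (m in [1:k]) is x ! (m-1).\<close>
definition encode :: "(bool list \<Rightarrow> 'f) \<Rightarrow> nat \<Rightarrow> nat \<Rightarrow> bool list \<Rightarrow> 'f list" where
  "encode cb k c M =
     map (\<lambda>m. cb (take c (drop (m * c) (M @ replicate (k * c - length M) False)))) [0..<k]"

definition hcoef :: "(nat \<Rightarrow> 'f::field) \<Rightarrow> nat \<Rightarrow> nat \<Rightarrow> nat \<Rightarrow> 'f" where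
  "hcoef pt k i j = (\<Prod>p\<in>{1..k} - {j}. (pt i - pt p) / (pt j - pt p))"

definition hdot :: "(nat \<Rightarrow> 'f::field) \<Rightarrow> nat \<Rightarrow> nat \<Rightarrow> 'f list \<Rightarrow> 'f" where
  "hdot pt k j x = (\<Sum>m\<in>{1..k}. hcoef pt k j m * x ! (m - 1))"

text \<open>Messages sent by a dishonest processor j to processor i (first argument j = sender,
  second argument i = receiver). For honest senders these fields are ignored.
  In Phases 2/3, None means: no new indicator sent.\<close>
record 'f adversary =
  a1  :: "nat \<Rightarrow> nat \<Rightarrow> 'f \<times> 'f"
  a1c :: "nat \<Rightarrow> nat \<Rightarrow> bool"
  a2  :: "nat \<Rightarrow> nat \<Rightarrow> bool option"
  a3  :: "nat \<Rightarrow> nat \<Rightarrow> bool option"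
  a4  :: "nat \<Rightarrow> nat \<Rightarrow> 'f"

text \<open>W i = initial message of processor i, viewed in GF(2^c)^k.\<close>

definition ysym :: "nat \<Rightarrow> (nat \<Rightarrow> 'f::field) \<Rightarrow> (nat \<Rightarrow> 'f list) \<Rightarrow> nat \<Rightarrow> nat \<Rightarrow> 'f" where
  "ysym t pt W i j = hdot pt (kpar t) j (W i)"

text \<open>Phase-1 pair received by i from j.\<close>
definition recv1 :: "nat \<Rightarrow> (nat \<Rightarrow> 'f::field) \<Rightarrow> nat set \<Rightarrow> (nat \<Rightarrow> 'f list) \<Rightarrow> 'f adversary
    \<Rightarrow> nat \<Rightarrow> nat \<Rightarrow> 'f \<times> 'f" where
  "recv1 t pt H W A i j =
     (if j \<in> H then (ysym t pt W j i, ysym t pt W j j) else a1 A j i)"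

definition u1 :: "nat \<Rightarrow> (nat \<Rightarrow> 'f::field) \<Rightarrow> nat set \<Rightarrow> (nat \<Rightarrow> 'f list) \<Rightarrow> 'f adversary
    \<Rightarrow> nat \<Rightarrow> nat \<Rightarrow> bool" where
  "u1 t pt H W A i j =
     (j = i \<or> recv1 t pt H W A i j = (ysym t pt W i i, ysym t pt W i j))"

definition s1 :: "nat \<Rightarrow> nat \<Rightarrow> (nat \<Rightarrow> 'f::field) \<Rightarrow> nat set \<Rightarrow> (nat \<Rightarrow> 'f list) \<Rightarrow> 'f adversary
    \<Rightarrow> nat \<Rightarrow> bool" where
  "s1 n t pt H W A i = (n - t \<le> card {j \<in> {1..n}. u1 t pt H W A i j})"

text \<open>Indicator of j recorded by i after Phase 1(c).\<close>
definition rec1 :: "nat \<Rightarrow> nat \<Rightarrow> (nat \<Rightarrow> 'f::field) \<Rightarrow> nat set \<Rightarrow> (nat \<Rightarrow> 'f list) \<Rightarrow> 'f adversary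
    \<Rightarrow> nat \<Rightarrow> nat \<Rightarrow> bool" where
  "rec1 n t pt H W A i j =
     (if j = i then s1 n t pt H W A i
      else if j \<in> H then s1 n t pt H W A j else a1c A j i)"

definition u2 :: "nat \<Rightarrow> nat \<Rightarrow> (nat \<Rightarrow> 'f::field) \<Rightarrow> nat set \<Rightarrow> (nat \<Rightarrow> 'f list) \<Rightarrow> 'f adversary
    \<Rightarrow> nat \<Rightarrow> nat \<Rightarrow> bool" where
  "u2 n t pt H W A i j = (u1 t pt H W A i j \<and> rec1 n t pt H W A i j)"

definition s2 :: "nat \<Rightarrow> nat \<Rightarrow> (nat \<Rightarrow> 'f::field) \<Rightarrow> nat set \<Rightarrow> (nat \<Rightarrow> 'f list) \<Rightarrow> 'f adversary
    \<Rightarrow> nat \<Rightarrow> bool" where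
  "s2 n t pt H W A i =
     (s1 n t pt H W A i \<and> n - t \<le> card {j \<in> {1..n}. u2 n t pt H W A i j})"

definition rec2 :: "nat \<Rightarrow> nat \<Rightarrow> (nat \<Rightarrow> 'f::field) \<Rightarrow> nat set \<Rightarrow> (nat \<Rightarrow> 'f list) \<Rightarrow> 'f adversary
    \<Rightarrow> nat \<Rightarrow> nat \<Rightarrow> bool" where
  "rec2 n t pt H W A i j =
     (if j = i then s2 n t pt H W A i
      else if j \<in> H then
        (if s1 n t pt H W A j \<and> \<not> s2 n t pt H W A j then False else rec1 n t pt H W A i j)
      else (case a2 A j i of None \<Rightarrow> rec1 n t pt H W A i j | Some b \<Rightarrow> b))"

definition u3 :: "nat \<Rightarrow> nat \<Rightarrow> (nat \<Rightarrow> 'f::field) \<Rightarrow> nat set \<Rightarrow> (nat \<Rightarrow> 'f list) \<Rightarrow> 'f adversary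
    \<Rightarrow> nat \<Rightarrow> nat \<Rightarrow> bool" where
  "u3 n t pt H W A i j = (u2 n t pt H W A i j \<and> rec2 n t pt H W A i j)"

definition s3 :: "nat \<Rightarrow> nat \<Rightarrow> (nat \<Rightarrow> 'f::field) \<Rightarrow> nat set \<Rightarrow> (nat \<Rightarrow> 'f list) \<Rightarrow> 'f adversary
    \<Rightarrow> nat \<Rightarrow> bool" where
  "s3 n t pt H W A i =
     (s2 n t pt H W A i \<and> n - t \<le> card {j \<in> {1..n}. u3 n t pt H W A i j})"

definition rec3 :: "nat \<Rightarrow> nat \<Rightarrow> (nat \<Rightarrow> 'f::field) \<Rightarrow> nat set \<Rightarrow> (nat \<Rightarrow> 'f list) \<Rightarrow> 'f adversary
    \<Rightarrow> nat \<Rightarrow> nat \<Rightarrow> bool" where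
  "rec3 n t pt H W A i j =
     (if j = i then s3 n t pt H W A i
      else if j \<in> H then
        (if s2 n t pt H W A j \<and> \<not> s3 n t pt H W A j then False else rec2 n t pt H W A i j)
      else (case a3 A j i of None \<Rightarrow> rec2 n t pt H W A i j | Some b \<Rightarrow> b))"

definition vote :: "nat \<Rightarrow> nat \<Rightarrow> (nat \<Rightarrow> 'f::field) \<Rightarrow> nat set \<Rightarrow> (nat \<Rightarrow> 'f list) \<Rightarrow> 'f adversary
    \<Rightarrow> nat \<Rightarrow> bool" where
  "vote n t pt H W A i = (2 * t + 1 \<le> card {j \<in> {1..n}. rec3 n t pt H W A i j})"

text \<open>Guarantee of the binary Byzantine agreement run on the votes: dec i is the decision
  of honest processor i (True = 1). Termination: every honest processor decides;
  agreement; validity.\<close>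
definition ba_spec :: "nat set \<Rightarrow> (nat \<Rightarrow> bool) \<Rightarrow> (nat \<Rightarrow> bool) \<Rightarrow> bool" where
  "ba_spec H v dec =
     ((\<forall>i\<in>H. \<forall>j\<in>H. dec i = dec j) \<and> (\<forall>b. (\<forall>i\<in>H. v i = b) \<longrightarrow> (\<forall>i\<in>H. dec i = b)))"

definition ybar :: "nat \<Rightarrow> nat \<Rightarrow> (nat \<Rightarrow> 'f::field) \<Rightarrow> nat set \<Rightarrow> (nat \<Rightarrow> 'f list) \<Rightarrow> 'f adversary
    \<Rightarrow> nat \<Rightarrow> 'f" where
  "ybar n t pt H W A i =
     (SOME v. \<forall>v'.
        card {j \<in> {1..n}. rec3 n t pt H W A i j \<and> fst (recv1 t pt H W A i j) = v'}
        \<le> card {j \<in> {1..n}. rec3 n t pt H W A i j \<and> fst (recv1 t pt H W A i j) = v})"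

text \<open>Phase-4 value received by i from j (default 0 if nothing is sent).\<close>
definition recv4 :: "nat \<Rightarrow> nat \<Rightarrow> (nat \<Rightarrow> 'f::field) \<Rightarrow> nat set \<Rightarrow> (nat \<Rightarrow> 'f list) \<Rightarrow> 'f adversary
    \<Rightarrow> (nat \<Rightarrow> bool) \<Rightarrow> nat \<Rightarrow> nat \<Rightarrow> 'f" where
  "recv4 n t pt H W A dec i j =
     (if j \<in> H then
        (if dec j \<and> \<not> s3 n t pt H W A j \<and> \<not> rec3 n t pt H W A j i \<and> i \<noteq> j
         then ybar n t pt H W A j else 0)
      else a4 A j i)"

definition zval :: "nat \<Rightarrow> nat \<Rightarrow> (nat \<Rightarrow> 'f::field) \<Rightarrow> nat set \<Rightarrow> (nat \<Rightarrow> 'f list) \<Rightarrow> 'f adversary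
    \<Rightarrow> (nat \<Rightarrow> bool) \<Rightarrow> nat \<Rightarrow> nat \<Rightarrow> 'f" where
  "zval n t pt H W A dec i j =
     (if j = i then ybar n t pt H W A i
      else if rec3 n t pt H W A i j then snd (recv1 t pt H W A i j)
      else recv4 n t pt H W A dec i j)"

text \<open>Output of honest processor i; None stands for phi.\<close>
definition cool_out :: "nat \<Rightarrow> nat \<Rightarrow> (nat \<Rightarrow> 'f::field) \<Rightarrow> nat set \<Rightarrow> (nat \<Rightarrow> 'f list) \<Rightarrow> 'f adversary
    \<Rightarrow> (nat \<Rightarrow> bool) \<Rightarrow> nat \<Rightarrow> 'f list option" where
  "cool_out n t pt H W A dec i =
     (if \<not> dec i then None
      else if s3 n t pt H W A i then Some (W i)
      else (let P = (\<lambda>x. length x = kpar t \<and>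
                 n - t \<le> card {j \<in> {1..n}. hdot pt (kpar t) j x = zval n t pt H W A dec i j})
            in if \<exists>x. P x then Some (SOME x. P x) else None))"

end

theory Submission
  imports Defs
begin

text \<open>If all honest processors start from the same encoded message, every pair of honest
  processors agrees on its Phase-1 link, so each honest processor sees at least its n - t
  honest peers as consistent and keeps its success indicator through Phases 1 to 3. Hence
  every honest vote is 1 (as n - t \<ge> 2t + 1), Byzantine agreement decides 1, and each honest
  processor outputs its unchanged initial message.\<close>

lemma card_honest_ge:
  assumes "H \<subseteq> {1..n}" and "card ({1..n} - H) \<le> t"
  shows "n - t \<le> card H"
proof -
  have "card ({1..n} - H) = n - card H"
    using assms(1) by (simp add: card_Diff_subset finite_subset)
  with assms(2) show ?thesis by simp
qed

context
  fixes n t :: nat and pt :: "nat \<Rightarrow> 'f::field" and H :: "nat set"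
    and W :: "nat \<Rightarrow> 'f list" and A :: "'f adversary"
  assumes honest_sub: "H \<subseteq> {1..n}"
    and faulty_le: "card ({1..n} - H) \<le> t"
    and honest_same_msg: "\<forall>i\<in>H. \<forall>j\<in>H. W i = W j"
begin

lemma quorum_if_holds_on_honest:
  assumes "\<forall>j\<in>H. P j"
  shows "n - t \<le> card {j \<in> {1..n}. P j}"
proof -
  have "card H \<le> card {j \<in> {1..n}. P j}"
    using honest_sub assms by (intro card_mono) auto
  with card_honest_ge[OF honest_sub faulty_le] show ?thesis by simp
qed

lemma u1_honest:
  assumes "i \<in> H" and "j \<in> H"
  shows "u1 t pt H W A i j"
proof -
  have "W j = W i"
    using honest_same_msg assms by blast
  with assms(2) show ?thesis by (simp add: u1_def recv1_def ysym_def)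
qed

lemma s1_honest: "i \<in> H \<Longrightarrow> s1 n t pt H W A i"
  unfolding s1_def by (intro quorum_if_holds_on_honest) (simp add: u1_honest)

lemma rec1_honest: "i \<in> H \<Longrightarrow> j \<in> H \<Longrightarrow> rec1 n t pt H W A i j"
  by (simp add: rec1_def s1_honest)

lemma s2_honest: "i \<in> H \<Longrightarrow> s2 n t pt H W A i"
  unfolding s2_def
  by (intro conjI s1_honest quorum_if_holds_on_honest) (simp_all add: u2_def u1_honest rec1_honest)

lemma rec2_honest: "i \<in> H \<Longrightarrow> j \<in> H \<Longrightarrow> rec2 n t pt H W A i j"
  by (simp add: rec2_def s2_honest rec1_honest)

lemma s3_honest: "i \<in> H \<Longrightarrow> s3 n t pt H W A i"
  unfolding s3_def
  by (intro conjI s2_honest quorum_if_holds_on_honest)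
    (simp_all add: u3_def u2_def u1_honest rec1_honest rec2_honest)

lemma rec3_honest: "i \<in> H \<Longrightarrow> j \<in> H \<Longrightarrow> rec3 n t pt H W A i j"
  by (simp add: rec3_def s3_honest rec2_honest)

lemma vote_honest:
  assumes "3 * t + 1 \<le> n" and "i \<in> H"
  shows "vote n t pt H W A i"
proof -
  have "n - t \<le> card {j \<in> {1..n}. rec3 n t pt H W A i j}"
    using assms(2) by (intro quorum_if_holds_on_honest) (simp add: rec3_honest)
  with assms(1) show ?thesis by (simp add: vote_def)
qed

lemma cool_out_honest:
  assumes "3 * t + 1 \<le> n" and "ba_spec H (vote n t pt H W A) dec" and "i \<in> H"
  shows "cool_out n t pt H W A dec i = Some (W i)"
proof -
  have "dec i"
    using assms vote_honest unfolding ba_spec_def by blast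
  with s3_honest[OF assms(3)] show ?thesis by (simp add: cool_out_def)
qed

end

theorem lemma5:
  fixes n t l :: nat
    and cb :: "bool list \<Rightarrow> 'f::field"
    and pt :: "nat \<Rightarrow> 'f"
    and H :: "nat set"
    and w :: "nat \<Rightarrow> bool list"
    and M :: "bool list"
    and A :: "'f adversary"
    and dec :: "nat \<Rightarrow> bool"
  assumes "n \<ge> 3 * t + 1"
    and "bij_betw cb {xs. length xs = cpar n t l} UNIV"
    and "inj_on pt {1..n}"
    and "\<forall>i\<in>{1..n}. pt i \<noteq> 0"
    and "H \<subseteq> {1..n}"
    and "card ({1..n} - H) \<le> t"
    and "\<forall>i\<in>{1..n}. length (w i) = l"
    and "length M = l"
    and "\<forall>i\<in>H. w i = M"
    and "ba_spec H
           (vote n t pt H (\<lambda>i. encode cb (kpar t) (cpar n t l) (w i)) A) dec"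
  shows "\<forall>i\<in>H. cool_out n t pt H (\<lambda>i. encode cb (kpar t) (cpar n t l) (w i)) A dec i
                = Some (encode cb (kpar t) (cpar n t l) M)"
proof
  fix i assume "i \<in> H"
  let ?W = "\<lambda>i. encode cb (kpar t) (cpar n t l) (w i)"
  have "\<forall>i\<in>H. \<forall>j\<in>H. ?W i = ?W j"
    using assms(9) by simp
  from cool_out_honest[OF assms(5,6) this assms(1,10) \<open>i \<in> H\<close>] \<open>i \<in> H\<close> assms(9)
  show "cool_out n t pt H ?W A dec i = Some (encode cb (kpar t) (cpar n t l) M)"
    by simp
qed

end
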